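(* Consider a finite tabular MDP with a unique optimal policy $\pi^*$ in which $d_\rho^\pi(s)\ge d_{\min}>0$ for all states $s$ and all full-support policies $\pi$. Let $\pi_t$ be generated by the discrete EG update $\pi_{t+1}(a|s)=\pi_t(a|s)e^{\eta[U^t_a(s)]_+}/Z^t_s$ with a sufficiently small constant step size $\eta>0$ (as required for $\pi_t\to\pi^*$). Then $\delta_t:=V^*-V(\pi_t)$ satisfies $\delta_t=O(1/t)$.
   Context: A finite MDP $(\mathcal S,\mathcal A,P,r,\gamma,\rho)$ with $r(s,a)\in[0,1]$, $\gamma\in[0,1)$; tabular softmax policies $\pi_\theta(a|s)=e^{\theta(s,a)}/\sum_{a'}e^{\theta(s,a')}$. $V^\pi,Q^\pi$ are the discounted state- and action-value functions, $V(\pi)=\mathbb{E}_{s\sim\rho}V^\pi(s)$, $V^*=V(\pi^* )$, $d_\rho^\pi(s)=(1-\gamma)\sum_{t\ge0}\gamma^t\Pr(s_t=s\mid\rho,\pi)$. $U^t_a(s):=Q^{\pi_t}(s,a)-V^{\pi_t}(s)$, $[x]_+=\max(x,0)$, $Z^t_s:=\sum_{a'}\pi_t(a'|s)e^{\eta[U^t_{a'}(s)]_+}$. *)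

theory Defs
  imports Complex_Main "HOL-Library.Landau_Symbols"
begin

definition is_distr :: "('b::finite \<Rightarrow> real) \<Rightarrow> bool" where
  "is_distr p \<longleftrightarrow> (\<forall>x. p x \<ge> 0) \<and> sum p UNIV = 1"

definition is_policy :: "('s::finite \<Rightarrow> 'a::finite \<Rightarrow> real) \<Rightarrow> bool" where
  "is_policy pol \<longleftrightarrow> (\<forall>s. is_distr (pol s))"

definition full_support :: "('s::finite \<Rightarrow> 'a::finite \<Rightarrow> real) \<Rightarrow> bool" where
  "full_support pol \<longleftrightarrow> is_policy pol \<and> (\<forall>s a. pol s a > 0)"

definition is_mdp :: "('s::finite \<Rightarrow> 'a::finite \<Rightarrow> 's \<Rightarrow> real) \<Rightarrow> ('s \<Rightarrow> 'a \<Rightarrow> real)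
    \<Rightarrow> real \<Rightarrow> ('s \<Rightarrow> real) \<Rightarrow> bool" where
  "is_mdp P r gam rho \<longleftrightarrow> (\<forall>s a. is_distr (P s a)) \<and> (\<forall>s a. 0 \<le> r s a \<and> r s a \<le> 1)
     \<and> 0 \<le> gam \<and> gam < 1 \<and> is_distr rho"

primrec state_dist :: "('s::finite \<Rightarrow> 'a::finite \<Rightarrow> 's \<Rightarrow> real) \<Rightarrow> ('s \<Rightarrow> 'a \<Rightarrow> real)
    \<Rightarrow> ('s \<Rightarrow> real) \<Rightarrow> nat \<Rightarrow> 's \<Rightarrow> real" where
  "state_dist P pol mu 0 = mu"
| "state_dist P pol mu (Suc t) =
     (\<lambda>s'. \<Sum>s\<in>UNIV. state_dist P pol mu t s * (\<Sum>a\<in>UNIV. pol s a * P s a s'))"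

definition Vfun :: "('s::finite \<Rightarrow> 'a::finite \<Rightarrow> 's \<Rightarrow> real) \<Rightarrow> ('s \<Rightarrow> 'a \<Rightarrow> real) \<Rightarrow> real
    \<Rightarrow> ('s \<Rightarrow> 'a \<Rightarrow> real) \<Rightarrow> 's \<Rightarrow> real" where
  "Vfun P r gam pol s = (\<Sum>t. gam ^ t *
      (\<Sum>s'\<in>UNIV. state_dist P pol (\<lambda>x. if x = s then 1 else 0) t s' * (\<Sum>a\<in>UNIV. pol s' a * r s' a)))"

definition Qfun :: "('s::finite \<Rightarrow> 'a::finite \<Rightarrow> 's \<Rightarrow> real) \<Rightarrow> ('s \<Rightarrow> 'a \<Rightarrow> real) \<Rightarrow> real
    \<Rightarrow> ('s \<Rightarrow> 'a \<Rightarrow> real) \<Rightarrow> 's \<Rightarrow> 'a \<Rightarrow> real" where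
  "Qfun P r gam pol s a = r s a + gam * (\<Sum>s'\<in>UNIV. P s a s' * Vfun P r gam pol s')"

definition Vrho :: "('s::finite \<Rightarrow> 'a::finite \<Rightarrow> 's \<Rightarrow> real) \<Rightarrow> ('s \<Rightarrow> 'a \<Rightarrow> real) \<Rightarrow> real
    \<Rightarrow> ('s \<Rightarrow> real) \<Rightarrow> ('s \<Rightarrow> 'a \<Rightarrow> real) \<Rightarrow> real" where
  "Vrho P r gam rho pol = (\<Sum>s\<in>UNIV. rho s * Vfun P r gam pol s)"

definition visit :: "('s::finite \<Rightarrow> 'a::finite \<Rightarrow> 's \<Rightarrow> real) \<Rightarrow> real
    \<Rightarrow> ('s \<Rightarrow> real) \<Rightarrow> ('s \<Rightarrow> 'a \<Rightarrow> real) \<Rightarrow> 's \<Rightarrow> real" where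
  "visit P gam rho pol s = (1 - gam) * (\<Sum>t. gam ^ t * state_dist P pol rho t s)"

definition optimal_policy :: "('s::finite \<Rightarrow> 'a::finite \<Rightarrow> 's \<Rightarrow> real) \<Rightarrow> ('s \<Rightarrow> 'a \<Rightarrow> real)
    \<Rightarrow> real \<Rightarrow> ('s \<Rightarrow> 'a \<Rightarrow> real) \<Rightarrow> bool" where
  "optimal_policy P r gam pol \<longleftrightarrow> is_policy pol \<and>
     (\<forall>pol'. is_policy pol' \<longrightarrow> (\<forall>s. Vfun P r gam pol' s \<le> Vfun P r gam pol s))"

definition adv :: "('s::finite \<Rightarrow> 'a::finite \<Rightarrow> 's \<Rightarrow> real) \<Rightarrow> ('s \<Rightarrow> 'a \<Rightarrow> real) \<Rightarrow> real
    \<Rightarrow> ('s \<Rightarrow> 'a \<Rightarrow> real) \<Rightarrow> 's \<Rightarrow> 'a \<Rightarrow> real" where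
  "adv P r gam pol s a = Qfun P r gam pol s a - Vfun P r gam pol s"

definition eg_step :: "('s::finite \<Rightarrow> 'a::finite \<Rightarrow> 's \<Rightarrow> real) \<Rightarrow> ('s \<Rightarrow> 'a \<Rightarrow> real) \<Rightarrow> real
    \<Rightarrow> real \<Rightarrow> ('s \<Rightarrow> 'a \<Rightarrow> real) \<Rightarrow> 's \<Rightarrow> 'a \<Rightarrow> real" where
  "eg_step P r gam eta pol s a =
     pol s a * exp (eta * max (adv P r gam pol s a) 0) /
     (\<Sum>a'\<in>UNIV. pol s a' * exp (eta * max (adv P r gam pol s a') 0))"

primrec eg_iter :: "('s::finite \<Rightarrow> 'a::finite \<Rightarrow> 's \<Rightarrow> real) \<Rightarrow> ('s \<Rightarrow> 'a \<Rightarrow> real) \<Rightarrow> real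
    \<Rightarrow> real \<Rightarrow> ('s \<Rightarrow> 'a \<Rightarrow> real) \<Rightarrow> nat \<Rightarrow> 's \<Rightarrow> 'a \<Rightarrow> real" where
  "eg_iter P r gam eta pol0 0 = pol0"
| "eg_iter P r gam eta pol0 (Suc t) = eg_step P r gam eta (eg_iter P r gam eta pol0 t)"

definition softmax :: "('s::finite \<Rightarrow> 'a::finite \<Rightarrow> real) \<Rightarrow> 's \<Rightarrow> 'a \<Rightarrow> real" where
  "softmax theta s a = exp (theta s a) / (\<Sum>a'\<in>UNIV. exp (theta s a'))"

end

(*
  Write U_t for the advantage of the iterate pi_t. By the performance difference lemma,
  V(pi_{t+1}) - V(pi_t) is the occupancy-weighted sum over states of the gain
  g_t(s) = sum_a pi_{t+1}(a|s) U_t(s,a). Because sum_a pi_t(a|s) U_t(s,a) = 0 and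
  e^x >= 1 + x, the gain is nonnegative and dominates
  eta pi_t(a|s) [U_t(s,a)]_+^2 / e^(eta/(1-gam)) for every action a; as occupancies of
  full-support policies are at least dmin, the values increase and these second-order
  terms tend to 0. A limit argument then gives V^(pi_t) -> V^*, so U_t -> U^*. The unique
  optimal policy is deterministic with a strictly negative advantage off its action a*(s),
  which forces pi_t(a*(s)|s) -> 1. Once pi_t(a*(s)|s) >= 1/2 everywhere, the performance
  difference lemma bounds delta_t by sum_s [U_t(s,a*(s))]_+ / (1-gam), and Cauchy-Schwarz
  turns the improvement bound into delta_t - delta_(t+1) >= c delta_t^2, which forces
  delta_t = O(1/t).
*)

theory Submission
  imports Defs
begin

lemma logistic_step_le:
  fixes y k :: real
  assumes "1 \<le> k" and "0 \<le> y" and "y \<le> 1 / k"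
  shows "y - y\<^sup>2 \<le> 1 / (k + 1)"
proof (cases "y \<le> 1 / (k + 1)")
  case True
  then show ?thesis
    using zero_le_power2[of y] by linarith
next
  case False
  have "1 / k \<le> 1"
    using assms(1) by simp
  then have "1 - y \<le> 1 - 1 / (k + 1)" "0 \<le> 1 - y"
    using assms False by linarith+
  then have "y * (1 - y) \<le> 1 / k * (1 - 1 / (k + 1))"
    using assms by (intro mult_mono) auto
  also have "\<dots> = 1 / (k + 1)"
    using assms(1) by (simp add: field_simps)
  finally show ?thesis by (simp add: power2_eq_square algebra_simps)
qed

lemma quadratic_decrease_bound:
  fixes d :: "nat \<Rightarrow> real"
  assumes c: "0 < c" and nonneg: "\<And>t. 0 \<le> d t"
    and decrease: "\<And>t. N \<le> t \<Longrightarrow> d (Suc t) \<le> d t - c * (d t)\<^sup>2"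
    and "N < t"
  shows "d t \<le> 1 / (c * real (t - N))"
proof -
  from \<open>N < t\<close> have "Suc N \<le> t" by simp
  then show ?thesis
  proof (induction t rule: dec_induct)
    case base
    have "c * d N - (c * d N)\<^sup>2 \<le> 1"
      using zero_le_power2[of "c * d N - 1 / 2"] by (simp add: power2_eq_square algebra_simps)
    then have "d N - c * (d N)\<^sup>2 \<le> 1 / c"
      using c by (simp add: field_simps power2_eq_square)
    then show ?case
      using decrease[of N] by simp
  next
    case (step t)
    define k where "k = real (t - N)"
    have k: "1 \<le> k" "c * k > 0"
      using step(1) c by (auto simp: k_def)
    have "c * d t \<le> 1 / k"
      using step(3) k by (simp add: k_def field_simps)
    then have "c * d t - (c * d t)\<^sup>2 \<le> 1 / (k + 1)"
      using k c nonneg[of t] by (intro logistic_step_le) auto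
    then have "(c * d t - (c * d t)\<^sup>2) / c \<le> 1 / (k + 1) / c"
      by (rule divide_right_mono) (use c in simp)
    moreover have "(c * d t - (c * d t)\<^sup>2) / c = d t - c * (d t)\<^sup>2"
      using c by (simp add: power2_eq_square field_simps)
    ultimately have "d t - c * (d t)\<^sup>2 \<le> 1 / (c * (k + 1))"
      by (simp add: mult.commute)
    moreover have "k + 1 = real (Suc t - N)"
      using step(1) by (simp add: k_def of_nat_diff)
    ultimately show ?case
      using decrease[of t] step(1) by simp
  qed
qed

lemma quadratic_decrease_bigo:
  fixes d :: "nat \<Rightarrow> real"
  assumes c: "0 < c" and nonneg: "\<And>t. 0 \<le> d t"
    and decrease: "\<And>t. N \<le> t \<Longrightarrow> d (Suc t) \<le> d t - c * (d t)\<^sup>2"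
  shows "d \<in> O(\<lambda>t. 1 / real t)"
proof (rule bigoI[where c = "2 / c"], rule eventually_sequentiallyI[of "2 * N + 1"])
  fix t assume t: "2 * N + 1 \<le> t"
  have "d t \<le> 1 / (c * real (t - N))"
    using t by (intro quadratic_decrease_bound[of c d N]) (use c nonneg decrease in auto)
  also have "\<dots> \<le> 2 / c * (1 / real t)"
    using t c by (simp add: field_simps of_nat_diff)
  finally show "norm (d t) \<le> 2 / c * norm (1 / real t)"
    using nonneg[of t] by simp
qed

lemma square_sum_le_card_sum_squares:
  fixes f :: "'b \<Rightarrow> real"
  assumes "finite A"
  shows "(\<Sum>x\<in>A. f x)\<^sup>2 \<le> card A * (\<Sum>x\<in>A. (f x)\<^sup>2)"
proof -
  have "(\<Sum>x\<in>A. f x)\<^sup>2 = (\<Sum>x\<in>A. \<Sum>y\<in>A. f x * f y)"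
    by (simp add: power2_eq_square sum_product)
  also have "\<dots> \<le> (\<Sum>x\<in>A. \<Sum>y\<in>A. ((f x)\<^sup>2 + (f y)\<^sup>2) / 2)"
    using sum_squares_bound by (intro sum_mono) (simp add: field_simps)
  also have "\<dots> = card A * (\<Sum>x\<in>A. (f x)\<^sup>2)"
    by (simp add: add_divide_distrib sum.distrib sum_divide_distrib[symmetric]
        sum.swap[of "\<lambda>x y. (f y)\<^sup>2 / 2"] flip: sum_distrib_left)
  finally show ?thesis .
qed

lemma tendsto_zero_cancel_factor:
  fixes f g :: "'b \<Rightarrow> real"
  assumes "((\<lambda>x. f x * g x) \<longlongrightarrow> 0) F" and "(g \<longlongrightarrow> l) F" and "l \<noteq> 0"
  shows "(f \<longlongrightarrow> 0) F"
proof (rule Lim_transform_eventually)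
  show "((\<lambda>x. f x * g x / g x) \<longlongrightarrow> 0) F"
    using tendsto_divide[OF assms] by simp
  have "\<forall>\<^sub>F x in F. g x \<noteq> 0"
    by (rule tendsto_imp_eventually_ne[OF assms(2,3)])
  then show "\<forall>\<^sub>F x in F. f x * g x / g x = f x"
    by eventually_elim simp
qed

lemma pos_part_square_le_exp_term:
  fixes eta p u :: real
  assumes "0 \<le> eta" and "0 \<le> p"
  shows "eta * p * (max u 0)\<^sup>2 \<le> p * (exp (eta * max u 0) - 1) * u"
proof (cases "u \<le> 0")
  case True
  then show ?thesis by simp
next
  case False
  have "eta * u \<le> exp (eta * u) - 1"
    using exp_ge_add_one_self[of "eta * u"] by linarith
  then have "eta * u * u \<le> (exp (eta * u) - 1) * u"
    using False by (intro mult_right_mono) auto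
  then have "p * (eta * u * u) \<le> p * ((exp (eta * u) - 1) * u)"
    using assms(2) by (rule mult_left_mono)
  then show ?thesis
    using False by (simp add: power2_eq_square mult_ac)
qed

abbreviation point_mass :: "'b \<Rightarrow> 'b \<Rightarrow> real" where
  "point_mass s \<equiv> (\<lambda>x. if x = s then 1 else 0)"

lemma sum_point_mass_mult: "(\<Sum>x\<in>UNIV. point_mass s x * g x) = g (s::'b::finite)"
proof -
  have "(\<Sum>x\<in>UNIV. point_mass s x * g x) = (\<Sum>x\<in>UNIV. if x = s then g x else 0)"
    by (rule sum.cong) auto
  then show ?thesis by simp
qed

lemma is_distr_point_mass: "is_distr (point_mass s)"
  by (simp add: is_distr_def)

lemma is_distr_nonneg: "is_distr p \<Longrightarrow> 0 \<le> p x"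
  and is_distr_sum: "is_distr p \<Longrightarrow> (\<Sum>x\<in>UNIV. p x) = 1"
  by (simp_all add: is_distr_def)

lemma is_distr_le_1: "is_distr p \<Longrightarrow> p x \<le> 1"
  by (metis is_distr_nonneg is_distr_sum finite member_le_sum UNIV_I)

lemma is_policy_nonneg: "is_policy pol \<Longrightarrow> 0 \<le> pol s a"
  and is_policy_sum: "is_policy pol \<Longrightarrow> (\<Sum>a\<in>UNIV. pol s a) = 1"
  by (simp_all add: is_policy_def is_distr_def)

lemma full_support_is_policy: "full_support pol \<Longrightarrow> is_policy pol"
  and full_support_pos: "full_support pol \<Longrightarrow> 0 < pol s a"
  by (simp_all add: full_support_def)

lemma convex_comb_le:
  fixes p f :: "'b::finite \<Rightarrow> real"
  assumes "is_distr p" and "\<And>x. f x \<le> B"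
  shows "(\<Sum>x\<in>UNIV. p x * f x) \<le> B"
proof -
  have "(\<Sum>x\<in>UNIV. p x * f x) \<le> (\<Sum>x\<in>UNIV. p x * B)"
    using assms by (intro sum_mono mult_left_mono) (auto simp: is_distr_nonneg)
  also have "\<dots> = B"
    using assms(1) by (simp add: is_distr_sum flip: sum_distrib_right)
  finally show ?thesis .
qed

lemma convex_comb_nonneg:
  fixes p f :: "'b::finite \<Rightarrow> real"
  assumes "is_distr p" and "\<And>x. 0 \<le> f x"
  shows "0 \<le> (\<Sum>x\<in>UNIV. p x * f x)"
  using assms by (intro sum_nonneg mult_nonneg_nonneg) (auto simp: is_distr_nonneg)

lemma is_policy_update: "is_policy pol \<Longrightarrow> is_distr p \<Longrightarrow> is_policy (pol(s := p))"
  by (simp add: is_policy_def)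

lemma full_support_softmax: "full_support (softmax theta)"
proof -
  have Z: "0 < (\<Sum>a\<in>UNIV. exp (theta s a))" for s
    by (rule sum_pos) auto
  have "(\<Sum>a\<in>UNIV. softmax theta s a) = 1" for s
    unfolding softmax_def using Z[of s] by (simp flip: sum_divide_distrib)
  then show ?thesis
    using Z by (simp add: full_support_def is_policy_def is_distr_def softmax_def less_imp_le)
qed

section \<open>Discounted Markov decision processes\<close>

locale finite_mdp =
  fixes P :: "'s::finite \<Rightarrow> 'a::finite \<Rightarrow> 's \<Rightarrow> real" and r :: "'s \<Rightarrow> 'a \<Rightarrow> real"
    and gam :: real and rho :: "'s \<Rightarrow> real"
  assumes mdp: "is_mdp P r gam rho"
begin

lemma P_distr: "is_distr (P s a)"
  and r_nonneg: "0 \<le> r s a" and r_le_1: "r s a \<le> 1"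
  and gam_nonneg: "0 \<le> gam" and gam_less_1: "gam < 1"
  and rho_distr: "is_distr rho"
  using mdp unfolding is_mdp_def by auto

abbreviation V where "V \<equiv> Vfun P r gam"
abbreviation Q where "Q \<equiv> Qfun P r gam"
abbreviation U where "U \<equiv> adv P r gam"
abbreviation sd where "sd \<equiv> state_dist P"

definition pol_trans :: "('s \<Rightarrow> 'a \<Rightarrow> real) \<Rightarrow> 's \<Rightarrow> 's \<Rightarrow> real" where
  "pol_trans pol s s' = (\<Sum>a\<in>UNIV. pol s a * P s a s')"

definition pol_reward :: "('s \<Rightarrow> 'a \<Rightarrow> real) \<Rightarrow> 's \<Rightarrow> real" where
  "pol_reward pol s = (\<Sum>a\<in>UNIV. pol s a * r s a)"

definition occupancy :: "('s \<Rightarrow> 'a \<Rightarrow> real) \<Rightarrow> ('s \<Rightarrow> real) \<Rightarrow> 's \<Rightarrow> real" where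
  "occupancy pol mu s = (\<Sum>t. gam ^ t * sd pol mu t s)"

lemma is_distr_pol_trans:
  assumes "is_policy pol"
  shows "is_distr (pol_trans pol s)"
proof -
  have "(\<Sum>s'\<in>UNIV. pol_trans pol s s') = (\<Sum>a\<in>UNIV. pol s a * (\<Sum>s'\<in>UNIV. P s a s'))"
    unfolding pol_trans_def by (subst sum.swap) (simp add: sum_distrib_left)
  also have "\<dots> = 1"
    using assms by (simp add: is_distr_sum[OF P_distr] is_policy_sum)
  moreover have "0 \<le> pol_trans pol s s'" for s'
    unfolding pol_trans_def using assms
    by (intro sum_nonneg mult_nonneg_nonneg is_policy_nonneg is_distr_nonneg[OF P_distr])
  ultimately show ?thesis
    unfolding is_distr_def by simp
qed

lemma pol_reward_bounds: "is_policy pol \<Longrightarrow> 0 \<le> pol_reward pol s \<and> pol_reward pol s \<le> 1"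
  unfolding pol_reward_def is_policy_def
  by (auto intro: convex_comb_nonneg convex_comb_le r_nonneg r_le_1)

lemma state_dist_Suc_pol_trans: "sd pol mu (Suc t) s' = (\<Sum>s\<in>UNIV. sd pol mu t s * pol_trans pol s s')"
  by (simp add: pol_trans_def)

lemma state_dist_shift: "sd pol mu (Suc t) = sd pol (\<lambda>s'. \<Sum>s\<in>UNIV. mu s * pol_trans pol s s') t"
  by (induction t) (simp_all add: pol_trans_def)

lemma is_distr_state_dist:
  assumes pol: "is_policy pol" and mu: "is_distr mu"
  shows "is_distr (sd pol mu t)"
proof (induction t)
  case 0
  then show ?case using mu by simp
next
  case (Suc t)
  have "(\<Sum>s'\<in>UNIV. sd pol mu (Suc t) s') = (\<Sum>s\<in>UNIV. sd pol mu t s * (\<Sum>s'\<in>UNIV. pol_trans pol s s'))"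
    unfolding state_dist_Suc_pol_trans by (subst sum.swap) (simp add: sum_distrib_left)
  also have "\<dots> = 1"
    using Suc is_distr_pol_trans[OF pol] by (simp add: is_distr_sum)
  moreover have "0 \<le> sd pol mu (Suc t) s'" for s'
    unfolding state_dist_Suc_pol_trans using is_distr_pol_trans[OF pol]
    by (intro convex_comb_nonneg[OF Suc]) (simp add: is_distr_nonneg)
  ultimately show ?case
    unfolding is_distr_def by simp
qed

lemma state_dist_linear: "sd pol mu t s' = (\<Sum>s\<in>UNIV. mu s * sd pol (point_mass s) t s')"
proof (induction t arbitrary: s')
  case 0
  then show ?case by (simp add: if_distrib cong: if_cong)
next
  case (Suc t)
  then show ?case
    unfolding state_dist_Suc_pol_trans
    by (simp add: sum_distrib_left sum_distrib_right mult.assoc) (rule sum.swap)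
qed

lemma summable_discounted:
  assumes "\<And>t. \<bar>f t\<bar> \<le> B"
  shows "summable (\<lambda>t. gam ^ t * f t)"
proof (rule summable_comparison_test')
  show "summable (\<lambda>t. gam ^ t * B)"
    using gam_nonneg gam_less_1 by (intro summable_mult2 summable_geometric) simp
  show "norm (gam ^ t * f t) \<le> gam ^ t * B" for t
    using assms[of t] gam_nonneg by (simp add: abs_mult mult_left_mono)
qed

lemma expected_reward_bounds:
  assumes "is_policy pol" and "is_distr mu"
  shows "0 \<le> (\<Sum>s\<in>UNIV. sd pol mu t s * pol_reward pol s)"
    and "(\<Sum>s\<in>UNIV. sd pol mu t s * pol_reward pol s) \<le> 1"
  using pol_reward_bounds[OF assms(1)] is_distr_state_dist[OF assms]
  by (auto intro: convex_comb_nonneg convex_comb_le)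

lemma summable_expected_reward:
  "is_policy pol \<Longrightarrow> is_distr mu \<Longrightarrow>
     summable (\<lambda>t. gam ^ t * (\<Sum>s\<in>UNIV. sd pol mu t s * pol_reward pol s))"
  by (rule summable_discounted[where B = 1]) (use expected_reward_bounds in fastforce)

lemma Vfun_eq_pol_reward:
  "V pol s = (\<Sum>t. gam ^ t * (\<Sum>s'\<in>UNIV. sd pol (point_mass s) t s' * pol_reward pol s'))"
  by (simp add: Vfun_def pol_reward_def)

lemma average_Vfun:
  assumes pol: "is_policy pol"
  shows "(\<Sum>s\<in>UNIV. mu s * V pol s) = (\<Sum>t. gam ^ t * (\<Sum>s'\<in>UNIV. sd pol mu t s' * pol_reward pol s'))"
proof -
  let ?R = "\<lambda>s t. gam ^ t * (\<Sum>s'\<in>UNIV. sd pol (point_mass s) t s' * pol_reward pol s')"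
  have summable: "summable (?R s)" for s
    by (rule summable_expected_reward[OF pol is_distr_point_mass])
  have "(\<Sum>s\<in>UNIV. mu s * V pol s) = (\<Sum>s\<in>UNIV. \<Sum>t. mu s * ?R s t)"
    unfolding Vfun_eq_pol_reward by (intro sum.cong refl suminf_mult[symmetric] summable)
  also have "\<dots> = (\<Sum>t. \<Sum>s\<in>UNIV. mu s * ?R s t)"
    by (intro suminf_sum[symmetric] summable_mult summable)
  also have "\<dots> = (\<Sum>t. gam ^ t * (\<Sum>s'\<in>UNIV. (\<Sum>s\<in>UNIV. mu s * sd pol (point_mass s) t s') * pol_reward pol s'))"
    by (simp add: sum_distrib_left sum_distrib_right mult_ac) (subst sum.swap, rule refl)
  also have "\<dots> = (\<Sum>t. gam ^ t * (\<Sum>s'\<in>UNIV. sd pol mu t s' * pol_reward pol s'))"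
    by (simp flip: state_dist_linear)
  finally show ?thesis .
qed

lemma Vfun_bounds: "is_policy pol \<Longrightarrow> 0 \<le> V pol s \<and> V pol s \<le> 1 / (1 - gam)"
proof -
  assume pol: "is_policy pol"
  note bounds = expected_reward_bounds[OF pol is_distr_point_mass, of s]
  note summable = summable_expected_reward[OF pol is_distr_point_mass, of s]
  have "V pol s \<le> (\<Sum>t. gam ^ t)"
    unfolding Vfun_eq_pol_reward
    using gam_nonneg gam_less_1 bounds
    by (intro suminf_le summable) (auto intro: mult_left_le)
  also have "\<dots> = 1 / (1 - gam)"
    using gam_nonneg gam_less_1 by (intro suminf_geometric) simp
  finally show ?thesis
    unfolding Vfun_eq_pol_reward
    using gam_nonneg bounds by (auto intro: suminf_nonneg summable)
qed

lemma bellman: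
  assumes pol: "is_policy pol"
  shows "V pol s = pol_reward pol s + gam * (\<Sum>s'\<in>UNIV. pol_trans pol s s' * V pol s')"
proof -
  define f where "f t = gam ^ t * (\<Sum>s'\<in>UNIV. sd pol (point_mass s) t s' * pol_reward pol s')" for t
  have summable: "summable f"
    unfolding f_def by (rule summable_expected_reward[OF pol is_distr_point_mass])
  have "(\<lambda>s'. \<Sum>x\<in>UNIV. point_mass s x * pol_trans pol x s') = pol_trans pol s"
    by (simp add: sum_point_mass_mult)
  then have f_Suc: "f (Suc t) = gam * (gam ^ t * (\<Sum>s'\<in>UNIV. sd pol (pol_trans pol s) t s' * pol_reward pol s'))" for t
    unfolding f_def state_dist_shift by simp
  have "V pol s = f 0 + (\<Sum>t. f (Suc t))"
    unfolding Vfun_eq_pol_reward f_def[symmetric]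
    using suminf_split_head[OF summable] by simp
  also have "(\<Sum>t. f (Suc t)) = gam * (\<Sum>s'\<in>UNIV. pol_trans pol s s' * V pol s')"
    unfolding f_Suc average_Vfun[OF pol]
    by (intro suminf_mult summable_expected_reward pol is_distr_pol_trans)
  finally show ?thesis
    by (simp add: f_def sum_point_mass_mult)
qed

lemma average_Qfun:
  "(\<Sum>a\<in>UNIV. pol' s a * Q pol s a) = pol_reward pol' s + gam * (\<Sum>s'\<in>UNIV. pol_trans pol' s s' * V pol s')"
proof -
  have "(\<Sum>a\<in>UNIV. pol' s a * (\<Sum>s'\<in>UNIV. P s a s' * V pol s'))
          = (\<Sum>s'\<in>UNIV. pol_trans pol' s s' * V pol s')"
    unfolding pol_trans_def sum_distrib_left sum_distrib_right
    by (subst sum.swap) (simp add: mult.assoc)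
  moreover have "(\<Sum>a\<in>UNIV. pol' s a * Q pol s a)
      = pol_reward pol' s + gam * (\<Sum>a\<in>UNIV. pol' s a * (\<Sum>s'\<in>UNIV. P s a s' * V pol s'))"
    unfolding Qfun_def pol_reward_def
    by (simp add: distrib_left sum.distrib sum_distrib_left mult_ac)
  ultimately show ?thesis by simp
qed

lemma average_adv:
  assumes "is_policy pol'"
  shows "(\<Sum>a\<in>UNIV. pol' s a * U pol s a)
           = pol_reward pol' s + gam * (\<Sum>s'\<in>UNIV. pol_trans pol' s s' * V pol s') - V pol s"
  using average_Qfun[of pol' s pol] is_policy_sum[OF assms]
  by (simp add: adv_def right_diff_distrib sum_subtractf flip: sum_distrib_right)

lemma average_adv_self: "is_policy pol \<Longrightarrow> (\<Sum>a\<in>UNIV. pol s a * U pol s a) = 0"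
  by (simp add: average_adv bellman)

lemma average_adv_split:
  assumes "is_policy pol"
  shows "pol s a * U pol s a = (\<Sum>b\<in>UNIV - {a}. pol s b * - U pol s b)"
  using average_adv_self[OF assms, of s] sum.remove[of UNIV a "\<lambda>b. pol s b * U pol s b"]
  by (simp add: sum_negf)

lemma adv_le: "is_policy pol \<Longrightarrow> U pol s a \<le> 1 / (1 - gam)"
proof -
  assume pol: "is_policy pol"
  have "(\<Sum>s'\<in>UNIV. P s a s' * V pol s') \<le> 1 / (1 - gam)"
    using Vfun_bounds[OF pol] by (intro convex_comb_le P_distr) auto
  then have "gam * (\<Sum>s'\<in>UNIV. P s a s' * V pol s') \<le> gam * (1 / (1 - gam))"
    using gam_nonneg by (rule mult_left_mono)
  moreover have "1 + gam * (1 / (1 - gam)) = 1 / (1 - gam)"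
    using gam_less_1 by (simp add: field_simps)
  ultimately show ?thesis
    using r_le_1[of s a] Vfun_bounds[OF pol, of s] by (simp add: adv_def Qfun_def)
qed

subsection \<open>Performance difference\<close>

lemma summable_occupancy:
  "is_policy pol \<Longrightarrow> is_distr mu \<Longrightarrow> summable (\<lambda>t. gam ^ t * sd pol mu t s)"
  by (rule summable_discounted[where B = 1])
     (metis abs_of_nonneg is_distr_le_1 is_distr_nonneg is_distr_state_dist)

lemma state_dist_bounds:
  "is_policy pol \<Longrightarrow> is_distr mu \<Longrightarrow> 0 \<le> sd pol mu t s \<and> sd pol mu t s \<le> 1"
  using is_distr_state_dist is_distr_nonneg is_distr_le_1 by blast

lemma occupancy_ge:
  assumes "is_policy pol" and "is_distr mu"
  shows "mu s \<le> occupancy pol mu s"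
proof -
  have "(\<Sum>t\<in>{0}. gam ^ t * sd pol mu t s) \<le> occupancy pol mu s"
    unfolding occupancy_def using state_dist_bounds[OF assms] gam_nonneg
    by (intro sum_le_suminf summable_occupancy assms) auto
  then show ?thesis by simp
qed

lemma occupancy_nonneg: "is_policy pol \<Longrightarrow> is_distr mu \<Longrightarrow> 0 \<le> occupancy pol mu s"
  using occupancy_ge is_distr_nonneg by (metis order_trans)

lemma occupancy_le:
  assumes "is_policy pol" and "is_distr mu"
  shows "occupancy pol mu s \<le> 1 / (1 - gam)"
proof -
  have "occupancy pol mu s \<le> (\<Sum>t. gam ^ t)"
    unfolding occupancy_def using state_dist_bounds[OF assms] gam_nonneg gam_less_1
    by (intro suminf_le summable_occupancy assms) (auto intro: mult_left_le)
  also have "\<dots> = 1 / (1 - gam)"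
    using gam_nonneg gam_less_1 by (intro suminf_geometric) simp
  finally show ?thesis .
qed

lemma visit_eq_occupancy: "visit P gam rho pol s = (1 - gam) * occupancy pol rho s"
  by (simp add: visit_def occupancy_def)

lemma visit_le_occupancy: "is_policy pol \<Longrightarrow> visit P gam rho pol s \<le> occupancy pol rho s"
  using occupancy_nonneg[OF _ rho_distr, of pol s] gam_nonneg gam_less_1
  by (simp add: visit_eq_occupancy mult_left_le_one_le)

lemma expected_evaluation_step:
  assumes eq: "\<And>s. D s = A s + gam * (\<Sum>s'\<in>UNIV. pol_trans pol s s' * D s')"
  shows "(\<Sum>s\<in>UNIV. sd pol mu t s * D s)
           = (\<Sum>s\<in>UNIV. sd pol mu t s * A s) + gam * (\<Sum>s\<in>UNIV. sd pol mu (Suc t) s * D s)"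
proof -
  have "(\<Sum>s\<in>UNIV. sd pol mu t s * (\<Sum>s'\<in>UNIV. pol_trans pol s s' * D s'))
          = (\<Sum>s'\<in>UNIV. sd pol mu (Suc t) s' * D s')"
    unfolding state_dist_Suc_pol_trans sum_distrib_left sum_distrib_right
    by (subst sum.swap) (simp add: mult.assoc)
  moreover have "(\<Sum>s\<in>UNIV. sd pol mu t s * D s) = (\<Sum>s\<in>UNIV. sd pol mu t s * A s
      + gam * (sd pol mu t s * (\<Sum>s'\<in>UNIV. pol_trans pol s s' * D s')))"
    by (rule sum.cong[OF refl]) (subst eq, simp add: algebra_simps)
  ultimately show ?thesis
    by (simp add: sum.distrib flip: sum_distrib_left del: state_dist.simps)
qed

lemma sums_occupancy:
  assumes "is_policy pol" and "is_distr mu"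
  shows "(\<lambda>t. gam ^ t * (\<Sum>s\<in>UNIV. sd pol mu t s * A s)) sums (\<Sum>s\<in>UNIV. occupancy pol mu s * A s)"
proof -
  have summable: "summable (\<lambda>t. \<Sum>s\<in>UNIV. gam ^ t * sd pol mu t s * A s)"
    by (intro summable_sum summable_mult2 summable_occupancy assms)
  have "(\<Sum>s\<in>UNIV. occupancy pol mu s * A s) = (\<Sum>s\<in>UNIV. \<Sum>t. gam ^ t * sd pol mu t s * A s)"
    unfolding occupancy_def
    by (intro sum.cong refl suminf_mult2 summable_occupancy assms)
  also have "\<dots> = (\<Sum>t. \<Sum>s\<in>UNIV. gam ^ t * sd pol mu t s * A s)"
    by (intro suminf_sum[symmetric] summable_mult2 summable_occupancy assms)
  finally have "(\<lambda>t. \<Sum>s\<in>UNIV. gam ^ t * sd pol mu t s * A s) sums (\<Sum>s\<in>UNIV. occupancy pol mu s * A s)"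
    using summable_sums[OF summable] by simp
  then show ?thesis
    by (simp add: sum_distrib_left mult.assoc)
qed

lemma occupancy_solves_evaluation_eq:
  assumes pol: "is_policy pol" and mu: "is_distr mu"
    and bounded: "\<And>s. \<bar>D s\<bar> \<le> B"
    and eq: "\<And>s. D s = A s + gam * (\<Sum>s'\<in>UNIV. pol_trans pol s s' * D s')"
  shows "(\<Sum>s\<in>UNIV. mu s * D s) = (\<Sum>s\<in>UNIV. occupancy pol mu s * A s)"
proof -
  define h where "h t = gam ^ t * (\<Sum>s\<in>UNIV. sd pol mu t s * D s)" for t
  have step: "gam ^ t * (\<Sum>s\<in>UNIV. sd pol mu t s * A s) = h t - h (Suc t)" for t
    using expected_evaluation_step[OF eq, of mu t]
    by (simp add: h_def algebra_simps del: state_dist.simps)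
  have "\<bar>\<Sum>s\<in>UNIV. sd pol mu t s * D s\<bar> \<le> B" for t
  proof -
    have "\<bar>\<Sum>s\<in>UNIV. sd pol mu t s * D s\<bar> \<le> (\<Sum>s\<in>UNIV. \<bar>sd pol mu t s * D s\<bar>)"
      by (rule sum_abs)
    also have "\<dots> = (\<Sum>s\<in>UNIV. sd pol mu t s * \<bar>D s\<bar>)"
      using state_dist_bounds[OF pol mu] by (simp add: abs_mult)
    also have "\<dots> \<le> B"
      using bounded by (intro convex_comb_le is_distr_state_dist pol mu)
    finally show ?thesis .
  qed
  then have h_bound: "\<forall>t. norm (h t) \<le> norm (gam ^ t) * B"
    using gam_nonneg by (simp add: h_def abs_mult mult_left_mono del: state_dist.simps)
  have "(\<lambda>t. gam ^ t) \<longlonglongrightarrow> 0"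
    using gam_nonneg gam_less_1 by (intro LIMSEQ_power_zero) simp
  then have "h \<longlonglongrightarrow> 0"
    by (rule tendsto_0_le[OF _ always_eventually[OF h_bound]])
  then have "(\<lambda>t. h t - h (Suc t)) sums (h 0 - 0)"
    by (rule telescope_sums')
  then have "(\<lambda>t. gam ^ t * (\<Sum>s\<in>UNIV. sd pol mu t s * A s)) sums (\<Sum>s\<in>UNIV. mu s * D s)"
    unfolding step by (simp add: h_def)
  with sums_occupancy[OF pol mu] show ?thesis
    by (rule sums_unique2[symmetric])
qed

theorem performance_difference:
  assumes p: "is_policy p" and q: "is_policy q" and mu: "is_distr mu"
  shows "(\<Sum>s\<in>UNIV. mu s * (V q s - V p s))
           = (\<Sum>s\<in>UNIV. occupancy q mu s * (\<Sum>a\<in>UNIV. q s a * U p s a))"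
proof (rule occupancy_solves_evaluation_eq[OF q mu])
  show "\<bar>V q s - V p s\<bar> \<le> 1 / (1 - gam)" for s
    using Vfun_bounds[OF p, of s] Vfun_bounds[OF q, of s] by linarith
  show "V q s - V p s = (\<Sum>a\<in>UNIV. q s a * U p s a)
          + gam * (\<Sum>s'\<in>UNIV. pol_trans q s s' * (V q s' - V p s'))" for s
    using bellman[OF q, of s]
    by (simp add: average_adv[OF q] right_diff_distrib sum_subtractf algebra_simps)
qed

subsection \<open>Unique optimal policies\<close>

lemma value_deviation:
  assumes pol: "is_policy pol"
  shows "V (pol(s := point_mass a)) x - V pol x
           = occupancy (pol(s := point_mass a)) (point_mass x) s * U pol s a"
proof -
  let ?q = "pol(s := point_mass a)"
  have q: "is_policy ?q"
    by (rule is_policy_update[OF pol is_distr_point_mass])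
  have gain: "(\<Sum>b\<in>UNIV. ?q y b * U pol y b) = point_mass s y * U pol s a" for y
    using average_adv_self[OF pol, of y] by (simp add: sum_point_mass_mult)
  have "V ?q x - V pol x = (\<Sum>y\<in>UNIV. point_mass x y * (V ?q y - V pol y))"
    by (simp add: sum_point_mass_mult)
  also have "\<dots> = (\<Sum>y\<in>UNIV. occupancy ?q (point_mass x) y * (\<Sum>b\<in>UNIV. ?q y b * U pol y b))"
    by (rule performance_difference[OF pol q is_distr_point_mass])
  also have "\<dots> = occupancy ?q (point_mass x) s * U pol s a"
    unfolding gain by (simp add: mult.left_commute[of _ "point_mass s _"] sum_point_mass_mult)
  finally show ?thesis .
qed

lemma optimal_adv_nonpos:
  assumes opt: "optimal_policy P r gam ps"
  shows "U ps s a \<le> 0"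
proof -
  let ?q = "ps(s := point_mass a)"
  have ps: "is_policy ps" and q: "is_policy ?q"
    using opt is_policy_update[OF _ is_distr_point_mass] by (auto simp: optimal_policy_def)
  have "occupancy ?q (point_mass s) s * U ps s a = V ?q s - V ps s"
    by (rule value_deviation[OF ps, symmetric])
  also have "\<dots> \<le> 0"
    using opt q by (simp add: optimal_policy_def)
  finally show ?thesis
    using occupancy_ge[OF q is_distr_point_mass[of s], of s] by (simp add: mult_le_0_iff)
qed

lemma adv_zero_imp_optimal_update:
  assumes opt: "optimal_policy P r gam ps" and zero: "U ps s a = 0"
  shows "optimal_policy P r gam (ps(s := point_mass a))"
proof -
  have ps: "is_policy ps"
    using opt by (simp add: optimal_policy_def)
  have "V (ps(s := point_mass a)) x = V ps x" for x
    using value_deviation[OF ps, of s a x] zero by simp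
  then show ?thesis
    using opt is_policy_update[OF ps is_distr_point_mass] by (simp add: optimal_policy_def)
qed

lemma exists_zero_adv:
  assumes pol: "is_policy pol" and nonpos: "\<And>a. U pol s a \<le> 0"
  shows "\<exists>a. U pol s a = 0"
proof -
  have "\<exists>a. pol s a \<noteq> 0"
    using is_policy_sum[OF pol, of s] by (metis sum.neutral zero_neq_one)
  then obtain a where a: "0 < pol s a"
    using is_policy_nonneg[OF pol] by (metis order_le_neq_trans)
  have "(\<Sum>b\<in>UNIV. pol s b * - U pol s b) = 0"
    using average_adv_self[OF pol, of s] by (simp add: sum_negf)
  then have "pol s a * - U pol s a = 0"
    using is_policy_nonneg[OF pol] nonpos
    by (subst (asm) sum_nonneg_eq_0_iff) (auto intro: mult_nonneg_nonpos)
  then show ?thesis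
    using a by auto
qed

theorem unique_optimal_policy_structure:
  assumes opt: "optimal_policy P r gam ps"
    and uniq: "\<And>pol. optimal_policy P r gam pol \<Longrightarrow> pol = ps"
  obtains astar where "\<And>s. ps s = point_mass (astar s)"
    and "\<And>s b. b \<noteq> astar s \<Longrightarrow> U ps s b < 0"
proof -
  have ps: "is_policy ps"
    using opt by (simp add: optimal_policy_def)
  have point_mass: "ps s = point_mass a" if "U ps s a = 0" for s a
    using uniq[OF adv_zero_imp_optimal_update[OF opt that]] by (metis fun_upd_same)
  define astar where "astar s = (SOME a. U ps s a = 0)" for s
  have "U ps s (astar s) = 0" for s
    unfolding astar_def using exists_zero_adv[OF ps optimal_adv_nonpos[OF opt]] by (rule someI_ex)
  then have "ps s = point_mass (astar s)" for s
    by (rule point_mass)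
  moreover have "U ps s b < 0" if "b \<noteq> astar s" for s b
  proof -
    have "U ps s b \<noteq> 0"
      using point_mass[of s b] \<open>ps s = point_mass (astar s)\<close> that by (metis zero_neq_one)
    then show ?thesis
      using optimal_adv_nonpos[OF opt] by (simp add: order_less_le)
  qed
  ultimately show ?thesis
    using that by blast
qed

subsection \<open>The exponentiated-gradient step\<close>

definition eg_gain :: "real \<Rightarrow> ('s \<Rightarrow> 'a \<Rightarrow> real) \<Rightarrow> 's \<Rightarrow> real" where
  "eg_gain eta pol s = (\<Sum>a\<in>UNIV. eg_step P r gam eta pol s a * U pol s a)"

lemma eg_normalizer_pos:
  "full_support pol \<Longrightarrow> 0 < (\<Sum>a\<in>UNIV. pol s a * exp (eta * max (U pol s a) 0))"
  by (rule sum_pos) (auto intro: mult_pos_pos full_support_pos)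

lemma full_support_eg_step:
  assumes pol: "full_support pol"
  shows "full_support (eg_step P r gam eta pol)"
proof -
  note Z = eg_normalizer_pos[OF pol, of _ eta]
  have "(\<Sum>a\<in>UNIV. eg_step P r gam eta pol s a) = 1" for s
    unfolding eg_step_def using Z[of s] by (simp flip: sum_divide_distrib)
  moreover have "0 < eg_step P r gam eta pol s a" for s a
    unfolding eg_step_def using Z full_support_pos[OF pol] by simp
  ultimately show ?thesis
    by (simp add: full_support_def is_policy_def is_distr_def less_imp_le)
qed

lemma full_support_eg_iter: "full_support pol \<Longrightarrow> full_support (eg_iter P r gam eta pol t)"
  by (induction t) (simp_all add: full_support_eg_step)

lemma eg_step_ratio_le:
  assumes pol: "full_support pol" and eta: "0 \<le> eta"
    and le: "max (U pol s b) 0 \<le> max (U pol s a) 0"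
  shows "eg_step P r gam eta pol s b / eg_step P r gam eta pol s a \<le> pol s b / pol s a"
proof -
  define w where "w a = exp (eta * max (U pol s a) 0)" for a
  have "w b \<le> w a"
    using le eta by (simp add: w_def mult_left_mono)
  have "eg_step P r gam eta pol s b / eg_step P r gam eta pol s a = pol s b * w b / (pol s a * w a)"
    unfolding eg_step_def w_def using eg_normalizer_pos[OF pol, of s eta] by simp
  also have "\<dots> \<le> pol s b * w a / (pol s a * w a)"
    using \<open>w b \<le> w a\<close> full_support_pos[OF pol, of s]
    by (intro divide_right_mono mult_left_mono) (auto simp: w_def intro!: mult_nonneg_nonneg less_imp_le)
  also have "\<dots> = pol s b / pol s a"
    by (simp add: w_def)
  finally show ?thesis .
qed

lemma eg_gain_eq:
  assumes "is_policy pol"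
  shows "eg_gain eta pol s
           = (\<Sum>a\<in>UNIV. pol s a * (exp (eta * max (U pol s a) 0) - 1) * U pol s a)
             / (\<Sum>a\<in>UNIV. pol s a * exp (eta * max (U pol s a) 0))"
proof -
  have "(\<Sum>a\<in>UNIV. pol s a * exp (eta * max (U pol s a) 0) * U pol s a)
      = (\<Sum>a\<in>UNIV. pol s a * (exp (eta * max (U pol s a) 0) - 1) * U pol s a)"
    using average_adv_self[OF assms, of s] by (simp add: algebra_simps sum_subtractf)
  then show ?thesis
    by (simp add: eg_gain_def eg_step_def flip: sum_divide_distrib)
qed

lemma eg_normalizer_le:
  assumes "is_policy pol" and "0 \<le> eta"
  shows "(\<Sum>a\<in>UNIV. pol s a * exp (eta * max (U pol s a) 0)) \<le> exp (eta / (1 - gam))"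
proof (rule convex_comb_le)
  show "is_distr (pol s)"
    using assms(1) by (simp add: is_policy_def)
  show "exp (eta * max (U pol s a) 0) \<le> exp (eta / (1 - gam))" for a
  proof -
    have "max (U pol s a) 0 \<le> 1 / (1 - gam)"
      using adv_le[OF assms(1), of s a] gam_less_1 by simp
    then have "eta * max (U pol s a) 0 \<le> eta * (1 / (1 - gam))"
      using assms(2) by (rule mult_left_mono)
    then show ?thesis by simp
  qed
qed

lemma eg_gain_ge:
  assumes pol: "full_support pol" and eta: "0 < eta"
  shows "eta * pol s b * (max (U pol s b) 0)\<^sup>2 / exp (eta / (1 - gam)) \<le> eg_gain eta pol s"
    and "0 \<le> eg_gain eta pol s"
proof -
  have p: "is_policy pol"
    by (rule full_support_is_policy[OF pol])
  define S where "S = (\<Sum>a\<in>UNIV. pol s a * (exp (eta * max (U pol s a) 0) - 1) * U pol s a)"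
  define Z where "Z = (\<Sum>a\<in>UNIV. pol s a * exp (eta * max (U pol s a) 0))"
  have term_ge: "eta * pol s a * (max (U pol s a) 0)\<^sup>2
      \<le> pol s a * (exp (eta * max (U pol s a) 0) - 1) * U pol s a" for a
    using eta is_policy_nonneg[OF p] by (intro pos_part_square_le_exp_term) auto
  have term_nonneg: "0 \<le> eta * pol s a * (max (U pol s a) 0)\<^sup>2" for a
    using eta is_policy_nonneg[OF p, of s a] by simp
  have "pol s b * (exp (eta * max (U pol s b) 0) - 1) * U pol s b \<le> S"
    unfolding S_def using term_ge term_nonneg by (intro member_le_sum) (auto intro: order_trans)
  then have S_ge: "eta * pol s b * (max (U pol s b) 0)\<^sup>2 \<le> S"
    using term_ge[of b] by linarith
  have Z: "0 < Z" "Z \<le> exp (eta / (1 - gam))"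
    using eg_normalizer_pos[OF pol] eg_normalizer_le[OF p] eta by (auto simp: Z_def)
  have "eta * pol s b * (max (U pol s b) 0)\<^sup>2 / exp (eta / (1 - gam)) \<le> S / exp (eta / (1 - gam))"
    using S_ge by (simp add: divide_right_mono)
  also have "\<dots> \<le> S / Z"
    using S_ge term_nonneg[of b] Z by (intro divide_left_mono) auto
  finally show "eta * pol s b * (max (U pol s b) 0)\<^sup>2 / exp (eta / (1 - gam)) \<le> eg_gain eta pol s"
    by (simp add: eg_gain_eq[OF p] S_def Z_def)
  show "0 \<le> eg_gain eta pol s"
    using S_ge term_nonneg[of b] Z by (simp add: eg_gain_eq[OF p] S_def Z_def)
qed

lemma Vrho_eg_step_increment:
  assumes "full_support pol"
  shows "Vrho P r gam rho (eg_step P r gam eta pol) - Vrho P r gam rho pol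
           = (\<Sum>s\<in>UNIV. occupancy (eg_step P r gam eta pol) rho s * eg_gain eta pol s)"
  unfolding eg_gain_def Vrho_def
  using performance_difference[OF full_support_is_policy full_support_is_policy rho_distr]
    assms full_support_eg_step
  by (simp add: right_diff_distrib sum_subtractf)

lemma Vfun_eg_step_mono:
  assumes pol: "full_support pol" and eta: "0 < eta"
  shows "V pol x \<le> V (eg_step P r gam eta pol) x"
proof -
  let ?q = "eg_step P r gam eta pol"
  have q: "is_policy ?q"
    by (rule full_support_is_policy[OF full_support_eg_step[OF pol]])
  have "V ?q x - V pol x = (\<Sum>y\<in>UNIV. occupancy ?q (point_mass x) y * eg_gain eta pol y)"
    using performance_difference[OF full_support_is_policy[OF pol] q is_distr_point_mass]
    by (simp add: sum_point_mass_mult eg_gain_def)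
  also have "\<dots> \<ge> 0"
    using occupancy_nonneg[OF q is_distr_point_mass] eg_gain_ge(2)[OF pol eta]
    by (simp add: sum_nonneg)
  finally show ?thesis by simp
qed

end

section \<open>Convergence of the exponentiated-gradient iterates\<close>

locale eg_run = finite_mdp P r gam rho
  for P :: "'s::finite \<Rightarrow> 'a::finite \<Rightarrow> 's \<Rightarrow> real" and r gam rho +
  fixes pistar :: "'s \<Rightarrow> 'a \<Rightarrow> real" and astar :: "'s \<Rightarrow> 'a"
    and dmin eta :: real and pol0 :: "'s \<Rightarrow> 'a \<Rightarrow> real"
  assumes opt: "optimal_policy P r gam pistar"
    and pistar_eq: "\<And>s. pistar s = point_mass (astar s)"
    and adv_gap: "\<And>s b. b \<noteq> astar s \<Longrightarrow> U pistar s b < 0"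
    and dmin_pos: "0 < dmin"
    and cover: "\<And>pol s. full_support pol \<Longrightarrow> dmin \<le> visit P gam rho pol s"
    and eta_pos: "0 < eta"
    and init: "full_support pol0"
begin

abbreviation \<pi> where "\<pi> t \<equiv> eg_iter P r gam eta pol0 t"

abbreviation Vr where "Vr pol \<equiv> Vrho P r gam rho pol"

lemma full_support_iter: "full_support (\<pi> t)"
  by (rule full_support_eg_iter[OF init])

lemma is_policy_iter: "is_policy (\<pi> t)"
  by (rule full_support_is_policy[OF full_support_iter])

lemma is_policy_opt: "is_policy pistar"
  using opt by (simp add: optimal_policy_def)

lemma Vfun_iter_le_opt: "V (\<pi> t) x \<le> V pistar x"
  using opt is_policy_iter by (simp add: optimal_policy_def)

lemma opt_average: "(\<Sum>a\<in>UNIV. pistar s a * f a) = f (astar s)"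
  by (simp add: pistar_eq sum_point_mass_mult)

lemma opt_value_diff:
  assumes "is_policy pol" and "is_distr mu"
  shows "(\<Sum>s\<in>UNIV. mu s * (V pistar s - V pol s))
           = (\<Sum>s\<in>UNIV. occupancy pistar mu s * U pol s (astar s))"
  using performance_difference[OF assms(1) is_policy_opt assms(2)] by (simp add: opt_average)

lemma sum_gain_le_increment: "dmin * (\<Sum>s\<in>UNIV. eg_gain eta (\<pi> t) s) \<le> Vr (\<pi> (Suc t)) - Vr (\<pi> t)"
proof -
  have "dmin \<le> occupancy (\<pi> (Suc t)) rho s" for s
    using cover[OF full_support_iter] visit_le_occupancy[OF is_policy_iter] order_trans by blast
  then have "dmin * (\<Sum>s\<in>UNIV. eg_gain eta (\<pi> t) s)
      \<le> (\<Sum>s\<in>UNIV. occupancy (\<pi> (Suc t)) rho s * eg_gain eta (\<pi> t) s)"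
    unfolding sum_distrib_left
    using eg_gain_ge(2)[OF full_support_iter eta_pos] by (intro sum_mono mult_right_mono) auto
  then show ?thesis
    using Vrho_eg_step_increment[OF full_support_iter] by simp
qed

lemma gain_le_increment: "dmin * eg_gain eta (\<pi> t) s \<le> Vr (\<pi> (Suc t)) - Vr (\<pi> t)"
proof -
  have "eg_gain eta (\<pi> t) s \<le> (\<Sum>s\<in>UNIV. eg_gain eta (\<pi> t) s)"
    using eg_gain_ge(2)[OF full_support_iter eta_pos] by (intro member_le_sum) auto
  then have "dmin * eg_gain eta (\<pi> t) s \<le> dmin * (\<Sum>s\<in>UNIV. eg_gain eta (\<pi> t) s)"
    using dmin_pos by (intro mult_left_mono) auto
  also have "\<dots> \<le> Vr (\<pi> (Suc t)) - Vr (\<pi> t)"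
    by (rule sum_gain_le_increment)
  finally show ?thesis .
qed

definition Vlim :: "'s \<Rightarrow> real" where
  "Vlim x = lim (\<lambda>t. V (\<pi> t) x)"

definition Ulim :: "'s \<Rightarrow> 'a \<Rightarrow> real" where
  "Ulim s a = r s a + gam * (\<Sum>s'\<in>UNIV. P s a s' * Vlim s') - Vlim s"

lemma Vfun_iter_tendsto: "(\<lambda>t. V (\<pi> t) x) \<longlonglongrightarrow> Vlim x"
proof -
  have "incseq (\<lambda>t. V (\<pi> t) x)"
    by (rule incseq_SucI) (simp add: Vfun_eg_step_mono[OF full_support_iter eta_pos])
  then obtain L where "(\<lambda>t. V (\<pi> t) x) \<longlonglongrightarrow> L"
    using Vfun_iter_le_opt incseq_convergent by blast
  then have "convergent (\<lambda>t. V (\<pi> t) x)"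
    by (rule convergentI)
  then show ?thesis
    unfolding Vlim_def by (simp add: convergent_LIMSEQ_iff)
qed

lemma adv_iter_tendsto: "(\<lambda>t. U (\<pi> t) s a) \<longlonglongrightarrow> Ulim s a"
  unfolding adv_def Qfun_def Ulim_def by (intro tendsto_intros Vfun_iter_tendsto)

lemma increment_tendsto_0: "(\<lambda>t. Vr (\<pi> (Suc t)) - Vr (\<pi> t)) \<longlonglongrightarrow> 0"
proof -
  have "(\<lambda>t. Vr (\<pi> t)) \<longlonglongrightarrow> (\<Sum>s\<in>UNIV. rho s * Vlim s)"
    unfolding Vrho_def by (intro tendsto_intros Vfun_iter_tendsto)
  from tendsto_diff[OF LIMSEQ_Suc[OF this] this] show ?thesis by simp
qed

lemma weighted_pos_adv_tendsto_0: "(\<lambda>t. \<pi> t s b * (max (U (\<pi> t) s b) 0)\<^sup>2) \<longlonglongrightarrow> 0"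
proof -
  define E where "E = exp (eta / (1 - gam))"
  define K where "K = E / (eta * dmin)"
  have upper: "\<pi> t s b * (max (U (\<pi> t) s b) 0)\<^sup>2 \<le> K * (Vr (\<pi> (Suc t)) - Vr (\<pi> t))" for t
  proof -
    have "dmin * (eta * \<pi> t s b * (max (U (\<pi> t) s b) 0)\<^sup>2 / E) \<le> dmin * eg_gain eta (\<pi> t) s"
      unfolding E_def
      by (rule mult_left_mono[OF eg_gain_ge(1)[OF full_support_iter eta_pos]]) (use dmin_pos in simp)
    also have "\<dots> \<le> Vr (\<pi> (Suc t)) - Vr (\<pi> t)"
      by (rule gain_le_increment)
    finally show ?thesis
      using eta_pos dmin_pos by (simp add: K_def E_def field_simps)
  qed
  have lower: "0 \<le> \<pi> t s b * (max (U (\<pi> t) s b) 0)\<^sup>2" for t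
    using full_support_pos[OF full_support_iter] by (simp add: less_imp_le)
  show ?thesis
    by (rule tendsto_sandwich[OF always_eventually always_eventually tendsto_const
          tendsto_mult_right_zero[OF increment_tendsto_0]])
       (use lower upper in auto)
qed

lemma iter_tendsto_0_if_Ulim_pos:
  assumes "0 < Ulim s b"
  shows "(\<lambda>t. \<pi> t s b) \<longlonglongrightarrow> 0"
proof (rule tendsto_zero_cancel_factor[OF weighted_pos_adv_tendsto_0])
  show "(\<lambda>t. (max (U (\<pi> t) s b) 0)\<^sup>2) \<longlonglongrightarrow> (max (Ulim s b) 0)\<^sup>2"
    by (intro tendsto_power tendsto_max adv_iter_tendsto tendsto_const)
  show "(max (Ulim s b) 0)\<^sup>2 \<noteq> 0"
    using assms by simp
qed

lemma iter_le_scaled_if_adv_dominated: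
  assumes dom: "\<And>t. N \<le> t \<Longrightarrow> U (\<pi> t) s b \<le> U (\<pi> t) s a" and "N \<le> t"
  shows "\<pi> t s b \<le> \<pi> N s b / \<pi> N s a * \<pi> t s a"
proof -
  define q where "q t = \<pi> t s b / \<pi> t s a" for t
  have decreasing: "q (Suc t) \<le> q t" if "N \<le> t" for t
  proof -
    have "max (U (\<pi> t) s b) 0 \<le> max (U (\<pi> t) s a) 0"
      using dom[OF that] by (rule max.mono) simp
    then show ?thesis
      unfolding q_def eg_iter.simps
      by (rule eg_step_ratio_le[OF full_support_iter less_imp_le[OF eta_pos]])
  qed
  from \<open>N \<le> t\<close> have "q t \<le> q N"
    by (induction rule: dec_induct) (auto intro: order_trans[OF decreasing])
  have "\<pi> t s b = q t * \<pi> t s a"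
    using full_support_pos[OF full_support_iter, of t s a] by (simp add: q_def)
  also have "\<dots> \<le> q N * \<pi> t s a"
    using full_support_pos[OF full_support_iter, of t s a]
    by (intro mult_right_mono \<open>q t \<le> q N\<close>) simp
  finally show ?thesis
    by (simp only: q_def)
qed

lemma Ulim_nonpos: "Ulim s a \<le> 0"
proof (rule ccontr)
  assume "\<not> Ulim s a \<le> 0"
  then have pos: "0 < Ulim s a" by simp
  txt \<open>Then every probability at s vanishes: directly if the limit advantage is positive,
    and otherwise because a outgrows the action.\<close>
  have "(\<lambda>t. \<pi> t s b) \<longlonglongrightarrow> 0" for b
  proof (cases "0 < Ulim s b")
    case True
    then show ?thesis by (rule iter_tendsto_0_if_Ulim_pos)
  next
    case False
    have "\<forall>\<^sub>F t in sequentially. U (\<pi> t) s b < Ulim s a / 2"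
      by (rule order_tendstoD(2)[OF adv_iter_tendsto]) (use pos False in simp)
    moreover have "\<forall>\<^sub>F t in sequentially. Ulim s a / 2 < U (\<pi> t) s a"
      by (rule order_tendstoD(1)[OF adv_iter_tendsto]) (use pos in simp)
    ultimately have "\<forall>\<^sub>F t in sequentially. U (\<pi> t) s b \<le> U (\<pi> t) s a"
      by eventually_elim simp
    then obtain N where "\<And>t. N \<le> t \<Longrightarrow> U (\<pi> t) s b \<le> U (\<pi> t) s a"
      unfolding eventually_sequentially by blast
    then have upper: "\<forall>\<^sub>F t in sequentially. \<pi> t s b \<le> \<pi> N s b / \<pi> N s a * \<pi> t s a"
      unfolding eventually_sequentially by (blast intro: iter_le_scaled_if_adv_dominated)
    have lower: "\<forall>\<^sub>F t in sequentially. 0 \<le> \<pi> t s b"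
      using full_support_pos[OF full_support_iter] by (simp add: less_imp_le)
    show ?thesis
      by (rule tendsto_sandwich[OF lower upper tendsto_const
            tendsto_mult_right_zero[OF iter_tendsto_0_if_Ulim_pos[OF pos]]])
  qed
  then have "(\<lambda>t. \<Sum>b\<in>UNIV. \<pi> t s b) \<longlonglongrightarrow> 0"
    by (rule tendsto_null_sum)
  then show False
    using is_policy_sum[OF is_policy_iter] LIMSEQ_const_iff[of "1::real" 0] by simp
qed

lemma Vlim_eq_opt: "Vlim x = V pistar x"
proof (rule antisym)
  show "Vlim x \<le> V pistar x"
    by (rule LIMSEQ_le_const2[OF Vfun_iter_tendsto]) (use Vfun_iter_le_opt in blast)
  have "V pistar x - V (\<pi> t) x = (\<Sum>y\<in>UNIV. occupancy pistar (point_mass x) y * U (\<pi> t) y (astar y))" for t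
    using opt_value_diff[OF is_policy_iter is_distr_point_mass] by (simp add: sum_point_mass_mult)
  then have "(\<lambda>t. V pistar x - V (\<pi> t) x)
      \<longlonglongrightarrow> (\<Sum>y\<in>UNIV. occupancy pistar (point_mass x) y * Ulim y (astar y))"
    by (simp only:) (intro tendsto_intros adv_iter_tendsto)
  moreover have "(\<lambda>t. V pistar x - V (\<pi> t) x) \<longlonglongrightarrow> V pistar x - Vlim x"
    by (intro tendsto_intros Vfun_iter_tendsto)
  ultimately have "V pistar x - Vlim x = (\<Sum>y\<in>UNIV. occupancy pistar (point_mass x) y * Ulim y (astar y))"
    by (rule LIMSEQ_unique[rotated])
  also have "\<dots> \<le> 0"
    using occupancy_nonneg[OF is_policy_opt is_distr_point_mass] Ulim_nonpos
    by (intro sum_nonpos mult_nonneg_nonpos)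
  finally show "V pistar x \<le> Vlim x" by simp
qed

lemma adv_iter_tendsto_opt: "(\<lambda>t. U (\<pi> t) s a) \<longlonglongrightarrow> U pistar s a"
  using adv_iter_tendsto unfolding Ulim_def Vlim_eq_opt by (simp add: adv_def Qfun_def)

lemma iter_nonopt_tendsto_0:
  assumes "b \<noteq> astar s"
  shows "(\<lambda>t. \<pi> t s b) \<longlonglongrightarrow> 0"
proof (rule tendsto_zero_cancel_factor)
  let ?R = "UNIV - {astar s}"
  have U_opt: "(\<lambda>t. U (\<pi> t) s (astar s)) \<longlonglongrightarrow> 0"
    using adv_iter_tendsto_opt[of s "astar s"] average_adv_self[OF is_policy_opt, of s]
    by (simp add: opt_average)
  have "\<forall>t. norm (\<pi> t s (astar s) * U (\<pi> t) s (astar s)) \<le> norm (U (\<pi> t) s (astar s)) * 1"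
    using is_policy_nonneg[OF is_policy_iter] is_distr_le_1[of "\<pi> _ s"] is_policy_iter
    by (simp add: is_policy_def abs_mult mult_left_le_one_le)
  then have opt_term: "(\<lambda>t. \<pi> t s (astar s) * U (\<pi> t) s (astar s)) \<longlonglongrightarrow> 0"
    by (rule tendsto_0_le[OF U_opt always_eventually])
  txt \<open>Since the advantages average to 0 under \<pi> t, the mass on actions of negative
    advantage is controlled by the vanishing term of astar s.\<close>
  have "\<forall>\<^sub>F t in sequentially. \<forall>c\<in>?R. U (\<pi> t) s c < 0"
    by (rule eventually_ball_finite) (auto intro: order_tendstoD(2)[OF adv_iter_tendsto_opt] adv_gap)
  then have "\<forall>\<^sub>F t in sequentially. 0 \<le> \<pi> t s b * - U (\<pi> t) s b
      \<and> \<pi> t s b * - U (\<pi> t) s b \<le> \<pi> t s (astar s) * U (\<pi> t) s (astar s)"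
  proof eventually_elim
    case (elim t)
    then have nonneg: "0 \<le> \<pi> t s c * - U (\<pi> t) s c" if "c \<in> ?R" for c
      using that is_policy_nonneg[OF is_policy_iter] by (simp add: mult_nonneg_nonpos less_imp_le)
    then have "\<pi> t s b * - U (\<pi> t) s b \<le> (\<Sum>c\<in>?R. \<pi> t s c * - U (\<pi> t) s c)"
      using assms by (intro member_le_sum) auto
    then show ?case
      using nonneg[of b] assms average_adv_split[OF is_policy_iter, of t s "astar s"] by simp
  qed
  then show "(\<lambda>t. \<pi> t s b * - U (\<pi> t) s b) \<longlonglongrightarrow> 0"
    unfolding eventually_conj_iff
    by (intro tendsto_sandwich[OF _ _ tendsto_const opt_term]) blast+
  show "(\<lambda>t. - U (\<pi> t) s b) \<longlonglongrightarrow> - U pistar s b"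
    by (intro tendsto_minus adv_iter_tendsto_opt)
  show "- U pistar s b \<noteq> 0"
    using adv_gap[OF assms] by simp
qed

lemma eventually_iter_opt_gt_half: "\<forall>\<^sub>F t in sequentially. \<forall>s. 1 / 2 < \<pi> t s (astar s)"
proof (intro eventually_all_finite)
  fix s
  have "\<pi> t s (astar s) = 1 - (\<Sum>b\<in>UNIV - {astar s}. \<pi> t s b)" for t
    using is_policy_sum[OF is_policy_iter, of t s] sum.remove[of UNIV "astar s" "\<pi> t s"] by simp
  moreover have "(\<lambda>t. 1 - (\<Sum>b\<in>UNIV - {astar s}. \<pi> t s b)) \<longlonglongrightarrow> 1 - 0"
    by (intro tendsto_diff tendsto_const tendsto_null_sum iter_nonopt_tendsto_0) auto
  ultimately have "(\<lambda>t. \<pi> t s (astar s)) \<longlonglongrightarrow> 1"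
    by simp
  then show "\<forall>\<^sub>F t in sequentially. 1 / 2 < \<pi> t s (astar s)"
    by (rule order_tendstoD) simp
qed

subsection \<open>The rate\<close>

definition gap :: "nat \<Rightarrow> real" where
  "gap t = Vr pistar - Vr (\<pi> t)"

lemma gap_nonneg: "0 \<le> gap t"
  unfolding gap_def Vrho_def
  using Vfun_iter_le_opt is_distr_nonneg[OF rho_distr]
  by (simp add: sum_subtractf[symmetric] right_diff_distrib[symmetric] sum_nonneg)

lemma gap_le_sum_pos_adv:
  "gap t \<le> 1 / (1 - gam) * (\<Sum>s\<in>UNIV. max (U (\<pi> t) s (astar s)) 0)"
proof -
  have "gap t = (\<Sum>s\<in>UNIV. occupancy pistar rho s * U (\<pi> t) s (astar s))"
    using opt_value_diff[OF is_policy_iter rho_distr]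
    by (simp add: gap_def Vrho_def right_diff_distrib sum_subtractf)
  also have "\<dots> \<le> (\<Sum>s\<in>UNIV. 1 / (1 - gam) * max (U (\<pi> t) s (astar s)) 0)"
  proof (rule sum_mono)
    fix s
    have "occupancy pistar rho s * U (\<pi> t) s (astar s)
        \<le> occupancy pistar rho s * max (U (\<pi> t) s (astar s)) 0"
      using occupancy_nonneg[OF is_policy_opt rho_distr] by (intro mult_left_mono) auto
    also have "\<dots> \<le> 1 / (1 - gam) * max (U (\<pi> t) s (astar s)) 0"
      using occupancy_le[OF is_policy_opt rho_distr] by (intro mult_right_mono) auto
    finally show "occupancy pistar rho s * U (\<pi> t) s (astar s)
        \<le> 1 / (1 - gam) * max (U (\<pi> t) s (astar s)) 0" .
  qed
  finally show ?thesis
    by (simp add: sum_distrib_left)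
qed

lemma gap_squared_le:
  "(gap t)\<^sup>2 \<le> card (UNIV :: 's set) / (1 - gam)\<^sup>2 * (\<Sum>s\<in>UNIV. (max (U (\<pi> t) s (astar s)) 0)\<^sup>2)"
proof -
  have "(gap t)\<^sup>2 \<le> (1 / (1 - gam) * (\<Sum>s\<in>UNIV. max (U (\<pi> t) s (astar s)) 0))\<^sup>2"
    using gap_le_sum_pos_adv gap_nonneg by (rule power_mono)
  also have "\<dots> = 1 / (1 - gam)\<^sup>2 * (\<Sum>s\<in>UNIV. max (U (\<pi> t) s (astar s)) 0)\<^sup>2"
    by (simp add: power_mult_distrib power_divide)
  also have "\<dots> \<le> 1 / (1 - gam)\<^sup>2 * (card (UNIV :: 's set) * (\<Sum>s\<in>UNIV. (max (U (\<pi> t) s (astar s)) 0)\<^sup>2))"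
    by (intro mult_left_mono square_sum_le_card_sum_squares) auto
  finally show ?thesis
    by simp
qed

lemma gap_decrease:
  assumes half: "\<And>s. 1 / 2 < \<pi> t s (astar s)"
  shows "dmin * (eta / (2 * exp (eta / (1 - gam))) * (\<Sum>s\<in>UNIV. (max (U (\<pi> t) s (astar s)) 0)\<^sup>2))
           \<le> gap t - gap (Suc t)"
proof -
  define E where "E = exp (eta / (1 - gam))"
  have "eta / (2 * E) * (max (U (\<pi> t) s (astar s)) 0)\<^sup>2 \<le> eg_gain eta (\<pi> t) s" for s
  proof -
    have "eta / (2 * E) * (max (U (\<pi> t) s (astar s)) 0)\<^sup>2
        = eta * (1 / 2) * (max (U (\<pi> t) s (astar s)) 0)\<^sup>2 / E"
      by simp
    also have "\<dots> \<le> eta * \<pi> t s (astar s) * (max (U (\<pi> t) s (astar s)) 0)\<^sup>2 / E"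
      using half[of s] eta_pos by (intro divide_right_mono mult_right_mono mult_left_mono) (auto simp: E_def)
    also have "\<dots> \<le> eg_gain eta (\<pi> t) s"
      unfolding E_def by (rule eg_gain_ge(1)[OF full_support_iter eta_pos])
    finally show ?thesis .
  qed
  then have "eta / (2 * E) * (\<Sum>s\<in>UNIV. (max (U (\<pi> t) s (astar s)) 0)\<^sup>2)
      \<le> (\<Sum>s\<in>UNIV. eg_gain eta (\<pi> t) s)"
    unfolding sum_distrib_left by (rule sum_mono)
  then have "dmin * (eta / (2 * E) * (\<Sum>s\<in>UNIV. (max (U (\<pi> t) s (astar s)) 0)\<^sup>2))
      \<le> dmin * (\<Sum>s\<in>UNIV. eg_gain eta (\<pi> t) s)"
    using dmin_pos by (intro mult_left_mono) auto
  also have "\<dots> \<le> gap t - gap (Suc t)"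
    using sum_gain_le_increment[of t] by (simp add: gap_def)
  finally show ?thesis
    unfolding E_def .
qed

lemma gap_quadratic_decrease: "\<exists>c>0. \<exists>N. \<forall>t\<ge>N. gap (Suc t) \<le> gap t - c * (gap t)\<^sup>2"
proof -
  define c where "c = dmin * eta / (2 * exp (eta / (1 - gam))) / (card (UNIV :: 's set) / (1 - gam)\<^sup>2)"
  have c: "0 < c"
    using dmin_pos eta_pos gam_less_1 by (simp add: c_def card_gt_0_iff)
  obtain N where N: "\<And>t s. N \<le> t \<Longrightarrow> 1 / 2 < \<pi> t s (astar s)"
    using eventually_iter_opt_gt_half unfolding eventually_sequentially by blast
  have "gap (Suc t) \<le> gap t - c * (gap t)\<^sup>2" if "N \<le> t" for t
  proof -
    have "c * (gap t)\<^sup>2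
        \<le> c * (card (UNIV :: 's set) / (1 - gam)\<^sup>2 * (\<Sum>s\<in>UNIV. (max (U (\<pi> t) s (astar s)) 0)\<^sup>2))"
      using c by (intro mult_left_mono gap_squared_le) simp
    also have "\<dots> = dmin * (eta / (2 * exp (eta / (1 - gam))) * (\<Sum>s\<in>UNIV. (max (U (\<pi> t) s (astar s)) 0)\<^sup>2))"
      using gam_less_1 by (simp add: c_def)
    also have "\<dots> \<le> gap t - gap (Suc t)"
      using N[OF that] by (rule gap_decrease)
    finally show ?thesis by simp
  qed
  with c show ?thesis by blast
qed

lemma gap_bigo: "gap \<in> O(\<lambda>t. 1 / real t)"
proof -
  obtain c N where "0 < c" and "\<And>t. N \<le> t \<Longrightarrow> gap (Suc t) \<le> gap t - c * (gap t)\<^sup>2"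
    using gap_quadratic_decrease by blast
  then show ?thesis
    using gap_nonneg by (intro quadratic_decrease_bigo[of c gap N]) auto
qed

end

theorem corollary2:
  fixes P :: "'s::finite \<Rightarrow> 'a::finite \<Rightarrow> 's \<Rightarrow> real"
    and r :: "'s \<Rightarrow> 'a \<Rightarrow> real" and gam :: real and rho :: "'s \<Rightarrow> real"
    and pistar :: "'s \<Rightarrow> 'a \<Rightarrow> real" and dmin :: real
  assumes mdp: "is_mdp P r gam rho"
    and opt: "optimal_policy P r gam pistar"
    and uniq: "\<And>pol. optimal_policy P r gam pol \<Longrightarrow> pol = pistar"
    and dmin_pos: "dmin > 0"
    and cover: "\<And>pol s. full_support pol \<Longrightarrow> visit P gam rho pol s \<ge> dmin"
  shows "\<exists>eta0>0. \<forall>eta. 0 < eta \<and> eta \<le> eta0 \<longrightarrow>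
           (\<forall>theta0. (\<lambda>t. Vrho P r gam rho pistar
                          - Vrho P r gam rho (eg_iter P r gam eta (softmax theta0) t))
                      \<in> O(\<lambda>t. 1 / real t))"
proof -
  interpret finite_mdp P r gam rho
    by unfold_locales (rule mdp)
  obtain astar where pistar_eq: "\<And>s. pistar s = point_mass (astar s)"
    and adv_gap: "\<And>s b. b \<noteq> astar s \<Longrightarrow> adv P r gam pistar s b < 0"
    using unique_optimal_policy_structure[OF opt uniq] by blast
  txt \<open>The rate holds for every positive step size, so any eta0 will do.\<close>
  have "(\<lambda>t. Vrho P r gam rho pistar - Vrho P r gam rho (eg_iter P r gam eta (softmax theta0) t))
          \<in> O(\<lambda>t. 1 / real t)" if "0 < eta" for eta theta0
  proof -
    interpret eg_run P r gam rho pistar astar dmin eta "softmax theta0"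
      by unfold_locales (fact opt pistar_eq adv_gap dmin_pos cover that full_support_softmax)+
    show ?thesis
      using gap_bigo unfolding gap_def .
  qed
  then show ?thesis
    by (intro exI[of _ 1]) auto
qed

end
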